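(* Let $\mathcal{L}=(\mathrm{Fm},\vdash)$ be a logic. 1. If properties $\wedge_P$, $\vee_P$ and $\neg_W$ hold for $\mathcal{L}$, then $\neg\varphi\vee\neg\psi\vdash\neg(\varphi\wedge\psi)$ for all $\varphi,\psi\in\mathrm{Fm}$. 2. If in addition property $\neg_{Il}$ holds for $\mathcal{L}$, then $\neg(\varphi\wedge\psi)\vdash\neg\varphi\vee\neg\psi$ for all $\varphi,\psi\in\mathrm{Fm}$.
   Context: A logic is a pair $\mathcal{L}=(\mathrm{Fm},\vdash)$ where $\mathrm{Fm}$ is the term (formula) algebra in some signature over a set of propositional variables and $\vdash\subseteq\mathcal{P}(\mathrm{Fm})\times\mathrm{Fm}$ is a consequence relation: (a) $\varphi\in\Gamma$ implies $\Gamma\vdash\varphi$; (b) $\Gamma\vdash\varphi$ and $\Gamma\subseteq\Delta$ imply $\Delta\vdash\varphi$; (c) if $\Delta\vdash\varphi$ and $\Gamma\vdash\psi$ for all $\psi\in\Delta$, then $\Gamma\vdash\varphi$. Write $Cn(\Gamma)=\{\psi\mid\Gamma\vdash\psi\}$, $Cn(\varphi)=Cn(\{\varphi\})$, $Cn(\Gamma,\varphi)=Cn(\Gamma\cup\{\varphi\})$, and $\varphi\vdash\psi$ for $\{\varphi\}\vdash\psi$. Property $\wedge_P$: there is a binary term $x\wedge y$ with $Cn(\varphi\wedge\psi)=Cn(\{\varphi,\psi\})$ for all $\varphi,\psi$. Property $\vee_P$: there is a binary term $x\vee y$ with $Cn(\varphi\vee\psi)=Cn(\varphi)\cap Cn(\psi)$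 for all $\varphi,\psi$. Property $\neg_W$: there is a unary term $\neg x$ such that $\psi\in Cn(\varphi)$ implies $\neg\varphi\in Cn(\neg\psi)$ for all $\varphi,\psi$. For a logic with $\neg_W$ (for the term $\neg$), property $\neg_{Il}$: $Cn(\varphi)\subseteq Cn(\neg\neg\varphi)$ for all $\varphi$. *)

theory Defs
  imports Main
begin

datatype ('v, 's) trm = Var 'v | Fn 's "('v, 's) trm list"

fun wf_trm :: "('s \<Rightarrow> nat) \<Rightarrow> ('v, 's) trm \<Rightarrow> bool" where
  "wf_trm ar (Var v) = True"
| "wf_trm ar (Fn f ts) = (length ts = ar f \<and> (\<forall>t\<in>set ts. wf_trm ar t))"

definition Fm :: "('s \<Rightarrow> nat) \<Rightarrow> ('v, 's) trm set" where
  "Fm ar = {t. wf_trm ar t}"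

fun vars :: "('v, 's) trm \<Rightarrow> 'v set" where
  "vars (Var v) = {v}"
| "vars (Fn f ts) = (\<Union>t\<in>set ts. vars t)"

fun subst :: "('v \<Rightarrow> ('v, 's) trm) \<Rightarrow> ('v, 's) trm \<Rightarrow> ('v, 's) trm" where
  "subst \<sigma> (Var v) = \<sigma> v"
| "subst \<sigma> (Fn f ts) = Fn f (map (subst \<sigma>) ts)"

definition bin_term :: "('s \<Rightarrow> nat) \<Rightarrow> 'v \<Rightarrow> 'v \<Rightarrow> ('v, 's) trm \<Rightarrow> bool" where
  "bin_term ar x y t \<longleftrightarrow> x \<noteq> y \<and> t \<in> Fm ar \<and> vars t \<subseteq> {x, y}"

definition app2 :: "'v \<Rightarrow> 'v \<Rightarrow> ('v, 's) trm \<Rightarrow> ('v, 's) trm \<Rightarrow> ('v, 's) trm \<Rightarrow> ('v, 's) trm" where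
  "app2 x y t \<phi> \<psi> = subst (\<lambda>v. if v = x then \<phi> else if v = y then \<psi> else Var v) t"

definition un_term :: "('s \<Rightarrow> nat) \<Rightarrow> 'v \<Rightarrow> ('v, 's) trm \<Rightarrow> bool" where
  "un_term ar x t \<longleftrightarrow> t \<in> Fm ar \<and> vars t \<subseteq> {x}"

definition app1 :: "'v \<Rightarrow> ('v, 's) trm \<Rightarrow> ('v, 's) trm \<Rightarrow> ('v, 's) trm" where
  "app1 x t \<phi> = subst (\<lambda>v. if v = x then \<phi> else Var v) t"

text \<open>A logic (Fm ar, D): D is a consequence relation on Fm ar.\<close>
definition logic :: "('s \<Rightarrow> nat) \<Rightarrow> (('v, 's) trm set \<Rightarrow> ('v, 's) trm \<Rightarrow> bool) \<Rightarrow> bool" where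
  "logic ar D \<longleftrightarrow>
     (\<forall>\<Gamma> \<phi>. D \<Gamma> \<phi> \<longrightarrow> \<Gamma> \<subseteq> Fm ar \<and> \<phi> \<in> Fm ar) \<and>
     (\<forall>\<Gamma> \<phi>. \<Gamma> \<subseteq> Fm ar \<and> \<phi> \<in> \<Gamma> \<longrightarrow> D \<Gamma> \<phi>) \<and>
     (\<forall>\<Gamma> \<Delta> \<phi>. D \<Gamma> \<phi> \<and> \<Gamma> \<subseteq> \<Delta> \<and> \<Delta> \<subseteq> Fm ar \<longrightarrow> D \<Delta> \<phi>) \<and>
     (\<forall>\<Gamma> \<Delta> \<phi>. \<Gamma> \<subseteq> Fm ar \<and> D \<Delta> \<phi> \<and> (\<forall>\<psi>\<in>\<Delta>. D \<Gamma> \<psi>) \<longrightarrow> D \<Gamma> \<phi>)"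

definition Cn :: "('s \<Rightarrow> nat) \<Rightarrow> (('v, 's) trm set \<Rightarrow> ('v, 's) trm \<Rightarrow> bool) \<Rightarrow> ('v, 's) trm set \<Rightarrow> ('v, 's) trm set" where
  "Cn ar D \<Gamma> = {\<psi> \<in> Fm ar. D \<Gamma> \<psi>}"

definition conj_P where
  "conj_P ar D x y t \<longleftrightarrow> bin_term ar x y t \<and>
     (\<forall>\<phi>\<in>Fm ar. \<forall>\<psi>\<in>Fm ar. Cn ar D {app2 x y t \<phi> \<psi>} = Cn ar D {\<phi>, \<psi>})"

definition disj_P where
  "disj_P ar D x y t \<longleftrightarrow> bin_term ar x y t \<and>
     (\<forall>\<phi>\<in>Fm ar. \<forall>\<psi>\<in>Fm ar. Cn ar D {app2 x y t \<phi> \<psi>} = Cn ar D {\<phi>} \<inter> Cn ar D {\<psi>})"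

definition neg_W where
  "neg_W ar D x t \<longleftrightarrow> un_term ar x t \<and>
     (\<forall>\<phi>\<in>Fm ar. \<forall>\<psi>\<in>Fm ar. \<psi> \<in> Cn ar D {\<phi>} \<longrightarrow> app1 x t \<phi> \<in> Cn ar D {app1 x t \<psi>})"

definition neg_Il where
  "neg_Il ar D x t \<longleftrightarrow> (\<forall>\<phi>\<in>Fm ar. Cn ar D {\<phi>} \<subseteq> Cn ar D {app1 x t (app1 x t \<phi>)})"

end

theory Submission
  imports Defs
begin

text \<open>Everything reduces to single-premise reasoning. The property conj_P makes
  \<open>\<phi> \<and> \<psi>\<close> behave as a conjunction on the right of \<open>\<turnstile>\<close>, disj_P makes \<open>\<phi> \<or> \<psi>\<close> behave as a
  disjunction on the left, and neg_W is contraposition. For (1), \<open>\<phi> \<and> \<psi> \<turnstile> \<phi>\<close> contraposes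
  to \<open>\<not>\<phi> \<turnstile> \<not>(\<phi> \<and> \<psi>)\<close>, likewise for \<open>\<psi>\<close>, and the two combine by disjunction elimination.
  For (2), \<open>\<not>\<phi> \<turnstile> \<not>\<phi> \<or> \<not>\<psi>\<close> contraposes to \<open>\<not>(\<not>\<phi> \<or> \<not>\<psi>) \<turnstile> \<not>\<not>\<phi> \<turnstile> \<phi>\<close>, likewise for \<open>\<psi>\<close>,
  so \<open>\<not>(\<not>\<phi> \<or> \<not>\<psi>) \<turnstile> \<phi> \<and> \<psi>\<close>; contraposing once more and removing the double negation
  with neg_Il gives \<open>\<not>(\<phi> \<and> \<psi>) \<turnstile> \<not>\<phi> \<or> \<not>\<psi>\<close>.\<close>

lemma wf_trm_subst:
  "wf_trm ar t \<Longrightarrow> (\<And>v. v \<in> vars t \<Longrightarrow> wf_trm ar (\<sigma> v)) \<Longrightarrow> wf_trm ar (subst \<sigma> t)"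
  by (induction t) auto

lemma app2_in_Fm: "bin_term ar x y t \<Longrightarrow> \<phi> \<in> Fm ar \<Longrightarrow> \<psi> \<in> Fm ar \<Longrightarrow> app2 x y t \<phi> \<psi> \<in> Fm ar"
  unfolding bin_term_def app2_def Fm_def by (auto intro!: wf_trm_subst)

lemma app1_in_Fm: "un_term ar x t \<Longrightarrow> \<phi> \<in> Fm ar \<Longrightarrow> app1 x t \<phi> \<in> Fm ar"
  unfolding un_term_def app1_def Fm_def by (auto intro!: wf_trm_subst)

lemma logic_in_Fm: "logic ar D \<Longrightarrow> D \<Gamma> \<phi> \<Longrightarrow> \<Gamma> \<subseteq> Fm ar \<and> \<phi> \<in> Fm ar"
  unfolding logic_def by meson

lemma logic_refl: "logic ar D \<Longrightarrow> \<Gamma> \<subseteq> Fm ar \<Longrightarrow> \<phi> \<in> \<Gamma> \<Longrightarrow> D \<Gamma> \<phi>"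
  unfolding logic_def by meson

lemma logic_cut: "logic ar D \<Longrightarrow> \<Gamma> \<subseteq> Fm ar \<Longrightarrow> D \<Delta> \<phi> \<Longrightarrow> (\<And>\<psi>. \<psi> \<in> \<Delta> \<Longrightarrow> D \<Gamma> \<psi>) \<Longrightarrow> D \<Gamma> \<phi>"
  unfolding logic_def by meson

lemma logic_trans:
  assumes L: "logic ar D" and \<phi>\<psi>: "D {\<phi>} \<psi>" and \<psi>\<chi>: "D {\<psi>} \<chi>"
  shows "D {\<phi>} \<chi>"
proof (rule logic_cut[OF L _ \<psi>\<chi>])
  show "{\<phi>} \<subseteq> Fm ar"
    using logic_in_Fm[OF L \<phi>\<psi>] by simp
qed (use \<phi>\<psi> in simp)

lemma Cn_eq_entails_iff:
  "Cn ar D \<Gamma> = Cn ar D \<Delta> \<Longrightarrow> \<phi> \<in> Fm ar \<Longrightarrow> D \<Gamma> \<phi> \<longleftrightarrow> D \<Delta> \<phi>"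
  unfolding Cn_def by blast

lemma Cn_eq_Int_entails_iff:
  "Cn ar D \<Gamma> = Cn ar D \<Delta> \<inter> Cn ar D \<Theta> \<Longrightarrow> \<phi> \<in> Fm ar \<Longrightarrow> D \<Gamma> \<phi> \<longleftrightarrow> D \<Delta> \<phi> \<and> D \<Theta> \<phi>"
  unfolding Cn_def by blast

lemma conj_P_entails_iff:
  assumes L: "logic ar D" and conj: "conj_P ar D x y c"
    and \<phi>: "\<phi> \<in> Fm ar" and \<psi>: "\<psi> \<in> Fm ar" and \<Gamma>: "\<Gamma> \<subseteq> Fm ar"
  shows "D \<Gamma> (app2 x y c \<phi> \<psi>) \<longleftrightarrow> D \<Gamma> \<phi> \<and> D \<Gamma> \<psi>"
proof -
  let ?C = "app2 x y c \<phi> \<psi>"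
  have C: "?C \<in> Fm ar"
    using conj \<phi> \<psi> by (simp add: conj_P_def app2_in_Fm)
  have Cn: "Cn ar D {?C} = Cn ar D {\<phi>, \<psi>}"
    using conj \<phi> \<psi> by (simp add: conj_P_def)
  have intro: "D {\<phi>, \<psi>} ?C"
    using Cn_eq_entails_iff[OF Cn C] logic_refl[OF L] C by simp
  have elim: "D {?C} \<phi>" "D {?C} \<psi>"
    using Cn_eq_entails_iff[OF Cn] logic_refl[OF L] \<phi> \<psi> by auto
  show ?thesis
    using logic_cut[OF L \<Gamma> intro] logic_cut[OF L \<Gamma> elim(1)] logic_cut[OF L \<Gamma> elim(2)] by blast
qed

lemma conj_P_elim:
  assumes L: "logic ar D" and conj: "conj_P ar D x y c" and \<phi>: "\<phi> \<in> Fm ar" and \<psi>: "\<psi> \<in> Fm ar"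
  shows "D {app2 x y c \<phi> \<psi>} \<phi>" and "D {app2 x y c \<phi> \<psi>} \<psi>"
proof -
  have "app2 x y c \<phi> \<psi> \<in> Fm ar"
    using conj \<phi> \<psi> by (simp add: conj_P_def app2_in_Fm)
  then show "D {app2 x y c \<phi> \<psi>} \<phi>" and "D {app2 x y c \<phi> \<psi>} \<psi>"
    using conj_P_entails_iff[OF L conj \<phi> \<psi>, of "{app2 x y c \<phi> \<psi>}"] logic_refl[OF L] by simp_all
qed

lemma disj_P_entails_iff:
  assumes "disj_P ar D x y d" and "\<phi> \<in> Fm ar" and "\<psi> \<in> Fm ar" and "\<chi> \<in> Fm ar"
  shows "D {app2 x y d \<phi> \<psi>} \<chi> \<longleftrightarrow> D {\<phi>} \<chi> \<and> D {\<psi>} \<chi>"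
proof -
  have "Cn ar D {app2 x y d \<phi> \<psi>} = Cn ar D {\<phi>} \<inter> Cn ar D {\<psi>}"
    using assms(1-3) by (simp add: disj_P_def)
  then show ?thesis
    using assms(4) by (rule Cn_eq_Int_entails_iff)
qed

lemma disj_P_intro:
  assumes L: "logic ar D" and disj: "disj_P ar D x y d" and "\<phi> \<in> Fm ar" and "\<psi> \<in> Fm ar"
  shows "D {\<phi>} (app2 x y d \<phi> \<psi>)" and "D {\<psi>} (app2 x y d \<phi> \<psi>)"
proof -
  have "app2 x y d \<phi> \<psi> \<in> Fm ar"
    using assms by (simp add: disj_P_def app2_in_Fm)
  then have "D {app2 x y d \<phi> \<psi>} (app2 x y d \<phi> \<psi>)"
    by (simp add: logic_refl[OF L])
  then show "D {\<phi>} (app2 x y d \<phi> \<psi>)" and "D {\<psi>} (app2 x y d \<phi> \<psi>)"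
    using disj_P_entails_iff[OF disj] assms(3,4) \<open>app2 x y d \<phi> \<psi> \<in> Fm ar\<close> by blast+
qed

lemma neg_W_contrapose:
  assumes neg: "neg_W ar D x n" and L: "logic ar D" and \<phi>\<psi>: "D {\<phi>} \<psi>"
  shows "D {app1 x n \<psi>} (app1 x n \<phi>)"
proof -
  have "\<phi> \<in> Fm ar" and "\<psi> \<in> Fm ar"
    using logic_in_Fm[OF L \<phi>\<psi>] by auto
  moreover have "\<psi> \<in> Cn ar D {\<phi>}"
    using \<open>\<psi> \<in> Fm ar\<close> \<phi>\<psi> by (simp add: Cn_def)
  ultimately have "app1 x n \<phi> \<in> Cn ar D {app1 x n \<psi>}"
    using neg by (simp add: neg_W_def)
  then show ?thesis
    by (simp add: Cn_def)
qed

lemma neg_Il_double_neg_elim: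
  assumes il: "neg_Il ar D x n" and L: "logic ar D" and \<phi>: "\<phi> \<in> Fm ar"
  shows "D {app1 x n (app1 x n \<phi>)} \<phi>"
proof -
  have "\<phi> \<in> Cn ar D {\<phi>}"
    using logic_refl[OF L] \<phi> by (simp add: Cn_def)
  also have "Cn ar D {\<phi>} \<subseteq> Cn ar D {app1 x n (app1 x n \<phi>)}"
    using il \<phi> by (simp add: neg_Il_def)
  finally show ?thesis
    by (simp add: Cn_def)
qed

lemma disj_neg_entails_neg_conj:
  assumes L: "logic ar D" and conj: "conj_P ar D x1 y1 c" and disj: "disj_P ar D x2 y2 d"
    and neg: "neg_W ar D x3 n" and \<phi>: "\<phi> \<in> Fm ar" and \<psi>: "\<psi> \<in> Fm ar"
  shows "D {app2 x2 y2 d (app1 x3 n \<phi>) (app1 x3 n \<psi>)} (app1 x3 n (app2 x1 y1 c \<phi> \<psi>))"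
proof -
  have N: "\<chi> \<in> Fm ar \<Longrightarrow> app1 x3 n \<chi> \<in> Fm ar" for \<chi>
    using neg by (simp add: neg_W_def app1_in_Fm)
  have "app2 x1 y1 c \<phi> \<psi> \<in> Fm ar"
    using conj \<phi> \<psi> by (simp add: conj_P_def app2_in_Fm)
  then show ?thesis
    using disj_P_entails_iff[OF disj N[OF \<phi>] N[OF \<psi>] N]
      neg_W_contrapose[OF neg L conj_P_elim(1)[OF L conj \<phi> \<psi>]]
      neg_W_contrapose[OF neg L conj_P_elim(2)[OF L conj \<phi> \<psi>]] by blast
qed

lemma neg_conj_entails_disj_neg:
  assumes L: "logic ar D" and conj: "conj_P ar D x1 y1 c" and disj: "disj_P ar D x2 y2 d"
    and neg: "neg_W ar D x3 n" and il: "neg_Il ar D x3 n"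
    and \<phi>: "\<phi> \<in> Fm ar" and \<psi>: "\<psi> \<in> Fm ar"
  shows "D {app1 x3 n (app2 x1 y1 c \<phi> \<psi>)} (app2 x2 y2 d (app1 x3 n \<phi>) (app1 x3 n \<psi>))"
proof -
  let ?N = "app1 x3 n"
  let ?X = "app2 x2 y2 d (?N \<phi>) (?N \<psi>)"
  note dne = neg_Il_double_neg_elim[OF il L]
  have N: "\<chi> \<in> Fm ar \<Longrightarrow> ?N \<chi> \<in> Fm ar" for \<chi>
    using neg by (simp add: neg_W_def app1_in_Fm)
  have X: "?X \<in> Fm ar"
    using disj N \<phi> \<psi> by (simp add: disj_P_def app2_in_Fm)
  have "D {?N ?X} (?N (?N \<phi>))" and "D {?N ?X} (?N (?N \<psi>))"
    using disj_P_intro[OF L disj N[OF \<phi>] N[OF \<psi>]] by (auto intro: neg_W_contrapose[OF neg L])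
  then have "D {?N ?X} \<phi>" and "D {?N ?X} \<psi>"
    using logic_trans[OF L _ dne] \<phi> \<psi> by auto
  then have "D {?N ?X} (app2 x1 y1 c \<phi> \<psi>)"
    using conj_P_entails_iff[OF L conj \<phi> \<psi>] N[OF X] by simp
  then have "D {?N (app2 x1 y1 c \<phi> \<psi>)} (?N (?N ?X))"
    by (rule neg_W_contrapose[OF neg L])
  then show ?thesis
    using logic_trans[OF L _ dne[OF X]] by blast
qed

theorem lemma2p1:
  fixes ar :: "'s \<Rightarrow> nat" and D :: "('v, 's) trm set \<Rightarrow> ('v, 's) trm \<Rightarrow> bool"
  assumes "logic ar D"
    and "conj_P ar D x1 y1 c"
    and "disj_P ar D x2 y2 d"
    and "neg_W ar D x3 n"
  shows "(\<forall>\<phi>\<in>Fm ar. \<forall>\<psi>\<in>Fm ar.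
            D {app2 x2 y2 d (app1 x3 n \<phi>) (app1 x3 n \<psi>)} (app1 x3 n (app2 x1 y1 c \<phi> \<psi>)))
       \<and> (neg_Il ar D x3 n \<longrightarrow>
          (\<forall>\<phi>\<in>Fm ar. \<forall>\<psi>\<in>Fm ar.
            D {app1 x3 n (app2 x1 y1 c \<phi> \<psi>)} (app2 x2 y2 d (app1 x3 n \<phi>) (app1 x3 n \<psi>))))"
  using disj_neg_entails_neg_conj[OF assms] neg_conj_entails_disj_neg[OF assms] by blast

end
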